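(* Let $X$ be a non-empty set. The monoid $T_X^0$ is protomodal, and for every maximal right pre-reduced subset $E\subseteq E(T_X^0)$, $T_X^0$ is an inductive left $E$-monoid, integral with $0\in E$, and $(PT_X,\cdot,D)\cong Rest_0(E,T_X^0)$ as unary semigroups.
   Context: All maps are composed left to right: for (partial) maps $s,t$ on $X$, $st$ means apply $s$ first, then $t$. $PT_X$ is the monoid of partial functions $X\to X$ under this composition, with $D(s)$ the identity map on $\mathrm{dom}(s)$; it is a left restriction monoid. $T_X$ is the submonoid of total functions, and $T_X^0$ is $T_X$ with a new zero element $0$ adjoined. For a semigroup $S$, $E(S)$ is its set of idempotents and $Sf=\{uf\mid u\in S\}$; for $e,f\in E(S)$, $e\le_r f$ iff $e=ef$, and $e\sim_r f$ iff $e\le_r f$ and $f\le_r e$. $E\subseteq E(S)$ is right pre-reduced if $e=ef$ and $f=fe$ imply $e=f$ for $e,f\in E$, and maximal right pre-reduced if it contains exactly one element of each $\sim_r$-class of $E(S)$. $Eq(s,t)=\{u\in S\mid us=ut\}$. A monoid $S$ is protomodal if for every $e\in E(S)$ and $s\in S$, $Eq(s,se)$ is non-empty and equals $Sf$ for some $f\in E(S)$. A monoid with zero is integral if $st=0$ implies $s=0$ or $t=0$. Let $S$ be a monoid and $1\in E\subseteq E(S)$. $S$ is an inductive left $E$-monoid if $E$ is right pre-reduced, $(E,\le_r)$ is a meet-semilattice with meet $\wedge$, and (I1') for all $t\in S$, $e\in E$ there is $t\cdot e\in E$ such that for all $s\in S$: $ste=st$ iff $s(t\cdot e)=s$; (I2')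 for $s\in S$, $e,f\in E$: $se=sf=s$ implies $s(e\wedge f)=s$. If $S$ is also integral with zero and $0\in E$, $Rest_0(E,S)$ is the set $\{(e,s)\in E\times S\mid es=s,\ s=0\Rightarrow e=0\}$ with multiplication $(e,s)(f,t)=(e\wedge(s\cdot f),(e\wedge(s\cdot f))st)$ and $D((e,s))=(e,e)$. *)

theory Defs
  imports Main
begin

definition is_monoid :: "('m \<Rightarrow> 'm \<Rightarrow> 'm) \<Rightarrow> 'm \<Rightarrow> bool" where
  "is_monoid mult one \<longleftrightarrow>
     (\<forall>a b c. mult (mult a b) c = mult a (mult b c)) \<and>
     (\<forall>a. mult one a = a \<and> mult a one = a)"

definition idems :: "('m \<Rightarrow> 'm \<Rightarrow> 'm) \<Rightarrow> 'm set" where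
  "idems mult = {e. mult e e = e}"

definition le_r :: "('m \<Rightarrow> 'm \<Rightarrow> 'm) \<Rightarrow> 'm \<Rightarrow> 'm \<Rightarrow> bool" where
  "le_r mult e f \<longleftrightarrow> e = mult e f"

definition sim_r :: "('m \<Rightarrow> 'm \<Rightarrow> 'm) \<Rightarrow> 'm \<Rightarrow> 'm \<Rightarrow> bool" where
  "sim_r mult e f \<longleftrightarrow> le_r mult e f \<and> le_r mult f e"

definition right_pre_reduced :: "('m \<Rightarrow> 'm \<Rightarrow> 'm) \<Rightarrow> 'm set \<Rightarrow> bool" where
  "right_pre_reduced mult E \<longleftrightarrow> E \<subseteq> idems mult \<and>
     (\<forall>e\<in>E. \<forall>f\<in>E. e = mult e f \<and> f = mult f e \<longrightarrow> e = f)"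

definition max_right_pre_reduced :: "('m \<Rightarrow> 'm \<Rightarrow> 'm) \<Rightarrow> 'm set \<Rightarrow> bool" where
  "max_right_pre_reduced mult E \<longleftrightarrow> E \<subseteq> idems mult \<and>
     (\<forall>e\<in>idems mult. \<exists>!f. f \<in> E \<and> sim_r mult e f)"

definition Eq_set :: "('m \<Rightarrow> 'm \<Rightarrow> 'm) \<Rightarrow> 'm \<Rightarrow> 'm \<Rightarrow> 'm set" where
  "Eq_set mult s t = {u. mult u s = mult u t}"

definition left_ideal :: "('m \<Rightarrow> 'm \<Rightarrow> 'm) \<Rightarrow> 'm \<Rightarrow> 'm set" where
  "left_ideal mult f = {mult u f | u. True}"

definition protomodal :: "('m \<Rightarrow> 'm \<Rightarrow> 'm) \<Rightarrow> 'm \<Rightarrow> bool" where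
  "protomodal mult one \<longleftrightarrow> is_monoid mult one \<and>
     (\<forall>e\<in>idems mult. \<forall>s. Eq_set mult s (mult s e) \<noteq> {} \<and>
        (\<exists>f\<in>idems mult. Eq_set mult s (mult s e) = left_ideal mult f))"

definition is_zero :: "('m \<Rightarrow> 'm \<Rightarrow> 'm) \<Rightarrow> 'm \<Rightarrow> bool" where
  "is_zero mult z \<longleftrightarrow> (\<forall>s. mult z s = z \<and> mult s z = z)"

definition integral :: "('m \<Rightarrow> 'm \<Rightarrow> 'm) \<Rightarrow> 'm \<Rightarrow> bool" where
  "integral mult z \<longleftrightarrow> is_zero mult z \<and>
     (\<forall>s t. mult s t = z \<longrightarrow> s = z \<or> t = z)"

definition is_meet :: "('m \<Rightarrow> 'm \<Rightarrow> 'm) \<Rightarrow> 'm set \<Rightarrow> 'm \<Rightarrow> 'm \<Rightarrow> 'm \<Rightarrow> bool" where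
  "is_meet mult E e f g \<longleftrightarrow> g \<in> E \<and> le_r mult g e \<and> le_r mult g f \<and>
     (\<forall>h\<in>E. le_r mult h e \<and> le_r mult h f \<longrightarrow> le_r mult h g)"

definition meetE :: "('m \<Rightarrow> 'm \<Rightarrow> 'm) \<Rightarrow> 'm set \<Rightarrow> 'm \<Rightarrow> 'm \<Rightarrow> 'm" where
  "meetE mult E e f = (THE g. is_meet mult E e f g)"

definition is_dot :: "('m \<Rightarrow> 'm \<Rightarrow> 'm) \<Rightarrow> 'm set \<Rightarrow> 'm \<Rightarrow> 'm \<Rightarrow> 'm \<Rightarrow> bool" where
  "is_dot mult E t e g \<longleftrightarrow> g \<in> E \<and>
     (\<forall>s. mult (mult s t) e = mult s t \<longleftrightarrow> mult s g = s)"

definition dotE :: "('m \<Rightarrow> 'm \<Rightarrow> 'm) \<Rightarrow> 'm set \<Rightarrow> 'm \<Rightarrow> 'm \<Rightarrow> 'm" where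
  "dotE mult E t e = (THE g. is_dot mult E t e g)"

definition inductive_left_E_monoid :: "('m \<Rightarrow> 'm \<Rightarrow> 'm) \<Rightarrow> 'm \<Rightarrow> 'm set \<Rightarrow> bool" where
  "inductive_left_E_monoid mult one E \<longleftrightarrow>
     is_monoid mult one \<and> one \<in> E \<and> right_pre_reduced mult E \<and>
     (\<forall>e\<in>E. \<forall>f\<in>E. \<exists>g. is_meet mult E e f g) \<and>
     (\<forall>t. \<forall>e\<in>E. \<exists>g. is_dot mult E t e g) \<and>
     (\<forall>s. \<forall>e\<in>E. \<forall>f\<in>E. mult s e = s \<and> mult s f = s \<longrightarrow> mult s (meetE mult E e f) = s)"

definition Rest0_carrier :: "('m \<Rightarrow> 'm \<Rightarrow> 'm) \<Rightarrow> 'm set \<Rightarrow> 'm \<Rightarrow> ('m \<times> 'm) set" where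
  "Rest0_carrier mult E z = {(e, s). e \<in> E \<and> mult e s = s \<and> (s = z \<longrightarrow> e = z)}"

definition Rest0_mult :: "('m \<Rightarrow> 'm \<Rightarrow> 'm) \<Rightarrow> 'm set \<Rightarrow> 'm \<times> 'm \<Rightarrow> 'm \<times> 'm \<Rightarrow> 'm \<times> 'm" where
  "Rest0_mult mult E p q = (case p of (e, s) \<Rightarrow> case q of (f, t) \<Rightarrow>
      let g = meetE mult E e (dotE mult E s f) in (g, mult (mult g s) t))"

definition Rest0_D :: "'m \<times> 'm \<Rightarrow> 'm \<times> 'm" where
  "Rest0_D p = (fst p, fst p)"

text \<open>Concrete monoids; composition is left to right.  \<open>T_X^0\<close>: total maps
  with an adjoined zero \<open>None\<close>.\<close>
fun tmult :: "('a \<Rightarrow> 'a) option \<Rightarrow> ('a \<Rightarrow> 'a) option \<Rightarrow> ('a \<Rightarrow> 'a) option" where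
  "tmult (Some f) (Some g) = Some (g \<circ> f)"
| "tmult _ _ = None"

definition pmult :: "('a \<rightharpoonup> 'a) \<Rightarrow> ('a \<rightharpoonup> 'a) \<Rightarrow> ('a \<rightharpoonup> 'a)" where
  "pmult s t = (\<lambda>x. case s x of None \<Rightarrow> None | Some y \<Rightarrow> t y)"

definition pD :: "('a \<rightharpoonup> 'a) \<Rightarrow> ('a \<rightharpoonup> 'a)" where
  "pD s = (\<lambda>x. if x \<in> dom s then Some x else None)"

end

theory Submission imports Defs begin

text \<open>The idempotents of \<open>T_X^0\<close> are the zero and the retractions, and
  \<open>e \<le>_r f\<close> holds iff the image of \<open>e\<close> lies in that of \<open>f\<close>.  Hence a maximal right
  pre-reduced \<open>E\<close> is a choice of one retraction onto each subset of \<open>X\<close> (the zero for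
  the empty set); meets in \<open>E\<close> are intersections of images, \<open>t \<cdot> e\<close> is the chosen
  retraction onto the \<open>t\<close>-preimage of the image of \<open>e\<close>, and \<open>Eq(s,se)\<close> is the left
  ideal generated by a retraction onto that preimage.  A partial map \<open>p\<close> corresponds
  to the pair consisting of the chosen retraction onto \<open>dom p\<close> and the total map
  "retract onto \<open>dom p\<close>, then apply \<open>p\<close>", and this correspondence is the isomorphism
  \<open>PT_X \<cong> Rest_0(E, T_X^0)\<close>.\<close>

lemma right_pre_reduced_antisym:
  assumes "right_pre_reduced mult E" "e \<in> E" "f \<in> E" "le_r mult e f" "le_r mult f e"
  shows "e = f"
  using assms unfolding right_pre_reduced_def le_r_def by blast

lemma meetE_eqI:
  assumes "right_pre_reduced mult E" "is_meet mult E e f g"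
  shows "meetE mult E e f = g"
  unfolding meetE_def
proof (rule the_equality)
  fix g' assume "is_meet mult E e f g'"
  with assms show "g' = g" unfolding is_meet_def by (blast intro: right_pre_reduced_antisym)
qed (rule assms(2))

lemma dotE_eqI:
  assumes E: "right_pre_reduced mult E" and g: "is_dot mult E t e g"
  shows "dotE mult E t e = g"
  unfolding dotE_def
proof (rule the_equality)
  fix g' assume g': "is_dot mult E t e g'"
  have "mult g g = g" "mult g' g' = g'"
    using E g g' unfolding right_pre_reduced_def is_dot_def idems_def by auto
  then have "le_r mult g g'" "le_r mult g' g"
    using g g' unfolding is_dot_def le_r_def by metis+
  with E g g' show "g' = g" unfolding is_dot_def by (blast intro: right_pre_reduced_antisym)
qed (rule g)

lemma left_ideal_idem:
  assumes "is_monoid mult one" "e \<in> idems mult"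
  shows "left_ideal mult e = {u. mult u e = u}"
proof -
  have assoc: "mult (mult a b) c = mult a (mult b c)" for a b c
    using assms(1) unfolding is_monoid_def by blast
  have "mult (mult u e) e = mult u e" for u
    using assms(2) by (simp add: assoc idems_def)
  then show ?thesis unfolding left_ideal_def by (auto intro: sym)
qed

lemma Eq_set_right_mult:
  assumes "is_monoid mult one"
  shows "Eq_set mult s (mult s e) = {u. mult (mult u s) e = mult u s}"
  using assms unfolding is_monoid_def Eq_set_def by auto

lemma tmult_assoc: "tmult (tmult a b) c = tmult a (tmult b c)"
  by (cases a; cases b; cases c) auto

lemma is_monoid_tmult: "is_monoid tmult (Some id)"
  unfolding is_monoid_def
proof (intro conjI allI)
  fix a :: "('a \<Rightarrow> 'a) option"
  show "tmult (Some id) a = a" "tmult a (Some id) = a" by (cases a; simp)+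
qed (rule tmult_assoc)

lemma integral_tmult: "integral tmult None"
  unfolding integral_def is_zero_def
proof (intro conjI allI impI)
  fix s t :: "('a \<Rightarrow> 'a) option"
  show "tmult None s = None" "tmult s None = None" by (cases s; simp)+
  show "tmult s t = None \<Longrightarrow> s = None \<or> t = None" by (cases s; cases t) auto
qed

lemma idems_tmult_iff: "a \<in> idems tmult \<longleftrightarrow> a = None \<or> (\<exists>f. a = Some f \<and> f \<circ> f = f)"
  unfolding idems_def by (cases a) auto

definition trange :: "('a \<Rightarrow> 'a) option \<Rightarrow> 'a set" where
  "trange a = (case a of None \<Rightarrow> {} | Some f \<Rightarrow> range f)"

lemma trange_simps [simp]: "trange None = {}" "trange (Some f) = range f"
  unfolding trange_def by simp_all

lemma trange_empty_iff [simp]: "trange a = {} \<longleftrightarrow> a = None"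
  by (cases a) auto

lemma idempotent_comp_eq_iff:
  assumes "f \<circ> f = f"
  shows "f \<circ> \<sigma> = \<sigma> \<longleftrightarrow> range \<sigma> \<subseteq> range f"
proof
  assume "f \<circ> \<sigma> = \<sigma>"
  then show "range \<sigma> \<subseteq> range f" by (metis image_comp image_subsetI rangeI)
next
  assume "range \<sigma> \<subseteq> range f"
  show "f \<circ> \<sigma> = \<sigma>"
  proof
    fix x
    obtain y where "\<sigma> x = f y" using \<open>range \<sigma> \<subseteq> range f\<close> by blast
    then show "(f \<circ> \<sigma>) x = \<sigma> x" using assms by (metis comp_apply)
  qed
qed

lemma tmult_idem_fixes_iff:
  assumes "a \<in> idems tmult"
  shows "tmult s a = s \<longleftrightarrow> trange s \<subseteq> trange a"
proof (cases s)
  case (Some \<sigma>)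
  show ?thesis
  proof (cases a)
    case (Some f)
    with assms have "f \<circ> f = f" by (simp add: idems_tmult_iff)
    then have "f \<circ> \<sigma> = \<sigma> \<longleftrightarrow> range \<sigma> \<subseteq> range f"
      by (rule idempotent_comp_eq_iff)
    with \<open>s = Some \<sigma>\<close> Some show ?thesis by simp
  qed (simp add: \<open>s = Some \<sigma>\<close>)
qed simp

lemma le_r_tmult_iff:
  assumes "b \<in> idems tmult"
  shows "le_r tmult a b \<longleftrightarrow> trange a \<subseteq> trange b"
  using tmult_idem_fixes_iff[OF assms, of a] unfolding le_r_def by auto

definition retraction_onto :: "'a set \<Rightarrow> ('a \<Rightarrow> 'a) option" where
  "retraction_onto S =
     (if S = {} then None else Some (\<lambda>x. if x \<in> S then x else (SOME y. y \<in> S)))"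

lemma retraction_onto_idem: "retraction_onto S \<in> idems tmult"
proof (cases "S = {}")
  case False
  then have "(SOME y. y \<in> S) \<in> S" by (simp add: some_in_eq)
  with False show ?thesis unfolding retraction_onto_def idems_def by (simp add: fun_eq_iff)
qed (simp add: retraction_onto_def idems_def)

lemma trange_retraction_onto [simp]: "trange (retraction_onto S) = S"
  unfolding retraction_onto_def by (auto simp: some_in_eq)

definition tpreimage :: "('a \<Rightarrow> 'a) option \<Rightarrow> 'a set \<Rightarrow> 'a set" where
  "tpreimage t S = (case t of None \<Rightarrow> UNIV | Some h \<Rightarrow> h -` S)"

lemma trange_tmult_subset_iff: "trange (tmult s t) \<subseteq> S \<longleftrightarrow> trange s \<subseteq> tpreimage t S"
  unfolding tpreimage_def by (cases s; cases t) auto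

lemma tmult_dot_iff:
  assumes "e \<in> idems tmult" "g \<in> idems tmult" "trange g = tpreimage t (trange e)"
  shows "tmult (tmult s t) e = tmult s t \<longleftrightarrow> tmult s g = s"
  unfolding tmult_idem_fixes_iff[OF assms(1)] tmult_idem_fixes_iff[OF assms(2)] assms(3)
  by (rule trange_tmult_subset_iff)

lemma protomodal_tmult: "protomodal tmult (Some id)"
  unfolding protomodal_def
proof (intro conjI ballI allI)
  fix e s assume e: "e \<in> idems tmult"
  let ?g = "retraction_onto (tpreimage s (trange e))"
  have "Eq_set tmult s (tmult s e) = {u. tmult (tmult u s) e = tmult u s}"
    by (rule Eq_set_right_mult[OF is_monoid_tmult])
  also have "\<dots> = {u. tmult u ?g = u}"
    using tmult_dot_iff[OF e retraction_onto_idem] by simp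
  also have "\<dots> = left_ideal tmult ?g"
    by (rule left_ideal_idem[OF is_monoid_tmult retraction_onto_idem, symmetric])
  finally have "Eq_set tmult s (tmult s e) = left_ideal tmult ?g" .
  then show "\<exists>f\<in>idems tmult. Eq_set tmult s (tmult s e) = left_ideal tmult f"
    using retraction_onto_idem by blast
  have "None \<in> Eq_set tmult s (tmult s e)" unfolding Eq_set_def by simp
  then show "Eq_set tmult s (tmult s e) \<noteq> {}" by blast
qed (rule is_monoid_tmult)

locale idempotent_transversal =
  fixes E :: "('a \<Rightarrow> 'a) option set"
  assumes max_rpr: "max_right_pre_reduced tmult E"
begin

lemma E_idems: "E \<subseteq> idems tmult"
  using max_rpr unfolding max_right_pre_reduced_def by blast

lemma idem_if_in_E: "a \<in> E \<Longrightarrow> a \<in> idems tmult"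
  using E_idems by blast

lemma ex1_in_E_trange: "\<exists>!a. a \<in> E \<and> trange a = S"
proof -
  have "\<exists>!a. a \<in> E \<and> sim_r tmult (retraction_onto S) a"
    using max_rpr retraction_onto_idem unfolding max_right_pre_reduced_def by blast
  moreover have "sim_r tmult (retraction_onto S) a \<longleftrightarrow> trange a = S" if "a \<in> E" for a
    using that by (auto simp: sim_r_def le_r_tmult_iff idem_if_in_E retraction_onto_idem)
  ultimately show ?thesis by metis
qed

definition rep :: "'a set \<Rightarrow> ('a \<Rightarrow> 'a) option" where
  "rep S = (THE a. a \<in> E \<and> trange a = S)"

lemma rep_in_E: "rep S \<in> E" and trange_rep [simp]: "trange (rep S) = S"
  using theI'[OF ex1_in_E_trange] unfolding rep_def by blast+

lemma rep_trange: "a \<in> E \<Longrightarrow> rep (trange a) = a"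
  unfolding rep_def by (rule the1_equality[OF ex1_in_E_trange]) simp

lemma rep_idem: "rep S \<in> idems tmult"
  using rep_in_E E_idems by blast

lemma rep_empty [simp]: "rep {} = None"
  by (metis trange_rep trange_empty_iff)

lemma None_in_E: "None \<in> E"
  using rep_in_E[of "{}"] by simp

definition retr :: "'a set \<Rightarrow> 'a \<Rightarrow> 'a" where
  "retr S = the (rep S)"

lemma rep_nonempty: "S \<noteq> {} \<Longrightarrow> rep S = Some (retr S)"
  unfolding retr_def using trange_rep[of S] by (cases "rep S") auto

lemma retr_comp_retr: "S \<noteq> {} \<Longrightarrow> retr S \<circ> retr S = retr S"
  using rep_idem[of S] rep_nonempty[of S] by (simp add: idems_def)

lemma retr_in: "S \<noteq> {} \<Longrightarrow> retr S x \<in> S"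
  using trange_rep[of S] rep_nonempty[of S] by auto

lemma retr_fixes:
  assumes "x \<in> S"
  shows "retr S x = x"
proof -
  have S: "S \<noteq> {}" using assms by blast
  then have "range (retr S) = S" using trange_rep[of S] rep_nonempty[of S] by simp
  then obtain y where "x = retr S y" using assms by blast
  then show ?thesis using retr_comp_retr[OF S] by (metis comp_apply)
qed

lemma one_in_E: "Some id \<in> E"
proof -
  have "retr UNIV = id" using retr_fixes[of _ UNIV] by auto
  then show ?thesis using rep_in_E[of UNIV] rep_nonempty[of UNIV] by simp
qed

lemma right_pre_reduced_E: "right_pre_reduced tmult E"
  unfolding right_pre_reduced_def
proof (intro conjI ballI impI)
  fix e f assume ef: "e \<in> E" "f \<in> E" and "e = tmult e f \<and> f = tmult f e"
  then have "trange e = trange f"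
    using le_r_tmult_iff[of f e] le_r_tmult_iff[of e f] idem_if_in_E unfolding le_r_def by auto
  then show "e = f" using rep_trange ef by metis
qed (rule E_idems)

lemma is_meet_rep: "a \<in> E \<Longrightarrow> b \<in> E \<Longrightarrow> is_meet tmult E a b (rep (trange a \<inter> trange b))"
  unfolding is_meet_def by (auto simp: le_r_tmult_iff idem_if_in_E rep_in_E rep_idem)

lemma meetE_rep: "a \<in> E \<Longrightarrow> b \<in> E \<Longrightarrow> meetE tmult E a b = rep (trange a \<inter> trange b)"
  by (rule meetE_eqI[OF right_pre_reduced_E is_meet_rep])

lemma is_dot_rep: "e \<in> E \<Longrightarrow> is_dot tmult E t e (rep (tpreimage t (trange e)))"
  unfolding is_dot_def using E_idems rep_in_E tmult_dot_iff[OF _ rep_idem] by auto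

lemma dotE_rep: "e \<in> E \<Longrightarrow> dotE tmult E t e = rep (tpreimage t (trange e))"
  by (rule dotE_eqI[OF right_pre_reduced_E is_dot_rep])

lemma inductive_left_E_monoid_tmult: "inductive_left_E_monoid tmult (Some id) E"
  unfolding inductive_left_E_monoid_def
proof (intro conjI ballI allI impI)
  fix s e f assume "e \<in> E" "f \<in> E" "tmult s e = s \<and> tmult s f = s"
  then show "tmult s (meetE tmult E e f) = s"
    by (simp add: meetE_rep tmult_idem_fixes_iff rep_idem idem_if_in_E)
qed (use is_monoid_tmult one_in_E right_pre_reduced_E is_meet_rep is_dot_rep in blast)+

lemma Rest0_mult_rep:
  assumes "a \<in> E" "b \<in> E"
  shows "Rest0_mult tmult E (a, s) (b, t) =
    (let g = rep (trange a \<inter> tpreimage s (trange b)) in (g, tmult (tmult g s) t))"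
  unfolding Rest0_mult_def using assms by (simp add: dotE_rep meetE_rep rep_in_E)

definition extend :: "('a \<rightharpoonup> 'a) \<Rightarrow> 'a \<Rightarrow> 'a" where
  "extend p x = the (p (retr (dom p) x))"

definition to_Rest0 :: "('a \<rightharpoonup> 'a) \<Rightarrow> ('a \<Rightarrow> 'a) option \<times> ('a \<Rightarrow> 'a) option" where
  "to_Rest0 p = (rep (dom p), if dom p = {} then None else Some (extend p))"

lemma extend_on_dom: "x \<in> dom p \<Longrightarrow> p x = Some (extend p x)"
  unfolding extend_def by (auto simp: retr_fixes)

lemma extend_comp_retr: "dom p \<noteq> {} \<Longrightarrow> extend p \<circ> retr (dom p) = extend p"
  using retr_comp_retr unfolding extend_def by (metis comp_apply fun_eq_iff)

lemma to_Rest0_in_carrier: "to_Rest0 p \<in> Rest0_carrier tmult E None"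
  unfolding to_Rest0_def Rest0_carrier_def
  using rep_in_E rep_nonempty extend_comp_retr by auto

lemma inj_to_Rest0: "inj to_Rest0"
proof (rule injI)
  fix p q assume eq: "to_Rest0 p = to_Rest0 q"
  then have dom_eq: "dom p = dom q" unfolding to_Rest0_def by (metis fst_conv trange_rep)
  show "p = q"
  proof (cases "dom p = {}")
    case False
    then have "extend p = extend q" using eq dom_eq unfolding to_Rest0_def by simp
    then show ?thesis using dom_eq extend_on_dom by (metis domIff ext)
  qed (use dom_eq in simp)
qed

lemma Rest0_carrier_subset_range_to_Rest0: "Rest0_carrier tmult E None \<subseteq> range to_Rest0"
proof
  fix c assume "c \<in> Rest0_carrier tmult E None"
  then obtain a s where c: "c = (a, s)" "a \<in> E" "tmult a s = s" "s = None \<longrightarrow> a = None"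
    unfolding Rest0_carrier_def by auto
  show "c \<in> range to_Rest0"
  proof (cases "a = None")
    case True
    with c have "c = to_Rest0 Map.empty" unfolding to_Rest0_def by simp
    then show ?thesis by blast
  next
    case False
    define A where "A = trange a"
    with False have A: "A \<noteq> {}" by simp
    have a: "a = Some (retr A)" using rep_trange[OF c(2)] rep_nonempty[OF A] A_def by simp
    with c False obtain \<sigma> where s: "s = Some \<sigma>" and \<sigma>: "\<sigma> \<circ> retr A = \<sigma>" by (cases s) auto
    define p where "p x = (if x \<in> A then Some (\<sigma> x) else None)" for x
    have dom_p: "dom p = A" unfolding p_def by (auto split: if_splits)
    have "extend p = \<sigma>"
      using \<sigma> retr_in[OF A] unfolding extend_def dom_p by (auto simp: p_def fun_eq_iff comp_def)
    then have "to_Rest0 p = c" using A a c(1) s dom_p rep_nonempty[OF A] unfolding to_Rest0_def by simp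
    then show ?thesis by blast
  qed
qed

lemma bij_to_Rest0: "bij_betw to_Rest0 UNIV (Rest0_carrier tmult E None)"
  unfolding bij_betw_def using inj_to_Rest0 to_Rest0_in_carrier Rest0_carrier_subset_range_to_Rest0 by blast

lemma to_Rest0_pD: "to_Rest0 (pD p) = Rest0_D (to_Rest0 p)"
proof -
  have dom_pD: "dom (pD p) = dom p" unfolding pD_def by (auto split: if_splits)
  have "dom p \<noteq> {} \<Longrightarrow> extend (pD p) = retr (dom p)"
    unfolding extend_def dom_pD by (auto simp: pD_def retr_in fun_eq_iff)
  then show ?thesis unfolding to_Rest0_def Rest0_D_def dom_pD by (simp add: rep_nonempty)
qed

lemma dom_pmult: "dom (pmult s t) = {x \<in> dom s. extend s x \<in> dom t}"
proof -
  have "s x = Some y \<Longrightarrow> extend s x = y" for x y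
    using extend_on_dom[of x s] by auto
  then show ?thesis unfolding pmult_def by (auto split: option.splits)
qed

lemma dom_pmult_tpreimage: "dom (pmult s t) = dom s \<inter> tpreimage (snd (to_Rest0 s)) (dom t)"
  unfolding dom_pmult to_Rest0_def tpreimage_def by auto

lemma extend_pmult:
  assumes "dom (pmult s t) \<noteq> {}"
  shows "extend (pmult s t) = extend t \<circ> extend s \<circ> retr (dom (pmult s t))"
proof
  fix x
  let ?y = "retr (dom (pmult s t)) x"
  have "?y \<in> dom s" "extend s ?y \<in> dom t"
    using retr_in[OF assms, of x] unfolding dom_pmult by auto
  then have "pmult s t ?y = Some (extend t (extend s ?y))"
    unfolding pmult_def using extend_on_dom by (metis option.simps(5))
  then show "extend (pmult s t) x = (extend t \<circ> extend s \<circ> retr (dom (pmult s t))) x"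
    unfolding extend_def[of "pmult s t"] by simp
qed

lemma to_Rest0_pmult: "to_Rest0 (pmult s t) = Rest0_mult tmult E (to_Rest0 s) (to_Rest0 t)"
proof -
  define C where "C = dom (pmult s t)"
  have "Rest0_mult tmult E (to_Rest0 s) (to_Rest0 t) =
      (rep C, tmult (tmult (rep C) (snd (to_Rest0 s))) (snd (to_Rest0 t)))"
    using Rest0_mult_rep[OF rep_in_E rep_in_E] dom_pmult_tpreimage[of s t]
    unfolding C_def by (simp add: to_Rest0_def Let_def)
  moreover have "C \<noteq> {} \<Longrightarrow> dom s \<noteq> {} \<and> dom t \<noteq> {}"
    unfolding C_def dom_pmult by auto
  ultimately show ?thesis
    using extend_pmult[of s t] unfolding to_Rest0_def C_def
    by (auto simp: rep_nonempty comp_assoc)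
qed

end

theorem theorem7p1:
  shows "protomodal (tmult :: ('a \<Rightarrow> 'a) option \<Rightarrow> _ \<Rightarrow> _) (Some id) \<and>
    (\<forall>E. max_right_pre_reduced (tmult :: ('a \<Rightarrow> 'a) option \<Rightarrow> _ \<Rightarrow> _) E \<longrightarrow>
       inductive_left_E_monoid tmult (Some id) E \<and> integral tmult None \<and> None \<in> E \<and>
       (\<exists>\<phi> :: ('a \<rightharpoonup> 'a) \<Rightarrow> ('a \<Rightarrow> 'a) option \<times> ('a \<Rightarrow> 'a) option.
          bij_betw \<phi> UNIV (Rest0_carrier tmult E None) \<and>
          (\<forall>s t. \<phi> (pmult s t) = Rest0_mult tmult E (\<phi> s) (\<phi> t)) \<and>
          (\<forall>s. \<phi> (pD s) = Rest0_D (\<phi> s))))"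
proof (intro conjI allI impI)
  fix E :: "('a \<Rightarrow> 'a) option set"
  assume "max_right_pre_reduced tmult E"
  then interpret idempotent_transversal E by unfold_locales
  show "inductive_left_E_monoid tmult (Some id) E" by (rule inductive_left_E_monoid_tmult)
  show "None \<in> E" by (rule None_in_E)
  show "\<exists>\<phi> :: ('a \<rightharpoonup> 'a) \<Rightarrow> ('a \<Rightarrow> 'a) option \<times> ('a \<Rightarrow> 'a) option.
          bij_betw \<phi> UNIV (Rest0_carrier tmult E None) \<and>
          (\<forall>s t. \<phi> (pmult s t) = Rest0_mult tmult E (\<phi> s) (\<phi> t)) \<and>
          (\<forall>s. \<phi> (pD s) = Rest0_D (\<phi> s))"
    using bij_to_Rest0 to_Rest0_pmult to_Rest0_pD by blast
qed (rule protomodal_tmult integral_tmult)+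

end
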